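(* Let $\Gamma$ be a weighted digraph with vertex set $\{1,\dots,n\}$, $n>1$, without loops and with strictly positive arc weights, let $L$ be its Laplacian matrix, $d$ its in-forest dimension, and $\tilde J=\sigma_{n-d}^{-1}Q_{n-d}$ its normalized matrix of maximum in-forests. Then: (i) $L+\tilde J^{*}$ is nonsingular; (ii) $\operatorname{rank}L=n-\operatorname{rank}\tilde J=n-d$; (iii) $\mathcal N(L)=\mathcal R(\tilde J)$ and $\mathcal R(L)=\mathcal N(\tilde J)$; (iv) $\mathcal R(L)\cap\mathcal R(\tilde J)=\{\mathbf 0\}$; (v) $\operatorname{ind}L=1$; (vi) $\tilde J$ is the eigenprojection of $L$.
   Context: $W=(w_{ij})$ is the matrix of arc weights ($w_{ij}>0$ iff there is an arc $i\to j$, else $0$). The Laplacian $L=(\ell_{ij})$: $\ell_{ij}=-w_{ij}$ for $j\ne i$, $\ell_{ii}=\sum_{k\ne i}w_{ik}$. The weight of a subgraph is the product of its arc weights (1 if no arcs); the weight of a set of subgraphs is the sum of their weights. A converging tree is a weakly connected digraph with one vertex (the root) of outdegree 0 and all others of outdegree 1; an in-forest is a spanning subgraph of $\Gamma$ whose weak components are converging trees. The in-forest dimension $d$ is the minimal number of trees in an in-forest of $\Gamma$ (so in-forests have at most $n-d$ arcs). $\sigma_k$ is the total weight of in-forests with $k$ arcs; $Q_k=(q^k_{ij})$ with $q^k_{ij}$ the total weight of in-forests with $k$ arcs in which $i$ lies in a tree rooted at $j$. $A^*$ is the conjugate transpose, $\mathcal R(A)$ the range and $\mathcal N(A)$ the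 null space of $A$. The index $\operatorname{ind}A$ of a square matrix is the least $k\ge0$ with $\operatorname{rank}A^{k+1}=\operatorname{rank}A^k$. The eigenprojection of $A$ is the idempotent matrix $B$ with $\mathcal R(B)=\mathcal N(A^\nu)$ and $\mathcal N(B)=\mathcal R(A^\nu)$, where $\nu=\operatorname{ind}A$. *)

theory Defs
  imports "HOL-Analysis.Analysis"
begin

text \<open>Vertices are the elements of a finite type 'n (playing the role of {1,...,n}, n = CARD('n)).
  A weighted digraph is given by its weight matrix W; there is an arc i->j iff W$i$j > 0.\<close>

definition arcs :: "real^'n^'n \<Rightarrow> ('n \<times> 'n) set" where
  "arcs W = {(i,j). W $ i $ j > 0}"

definition laplacian :: "real^'n^'n \<Rightarrow> real^'n^'n" where
  "laplacian W = (\<chi> i j. if i = j then (\<Sum>k\<in>UNIV - {i}. W $ i $ k) else - W $ i $ j)"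

definition outdeg :: "('n \<times> 'n) set \<Rightarrow> 'n \<Rightarrow> nat" where
  "outdeg A v = card {u. (v,u) \<in> A}"

definition weak_comp :: "('n \<times> 'n) set \<Rightarrow> 'n \<Rightarrow> 'n set" where
  "weak_comp F i = {j. (i,j) \<in> (F \<union> F\<inverse>)\<^sup>*}"

definition weakly_connected :: "'n set \<Rightarrow> ('n \<times> 'n) set \<Rightarrow> bool" where
  "weakly_connected C A \<longleftrightarrow> (\<forall>x\<in>C. \<forall>y\<in>C. (x,y) \<in> (A \<union> A\<inverse>)\<^sup>*)"

definition converging_tree :: "'n set \<Rightarrow> ('n \<times> 'n) set \<Rightarrow> bool" where
  "converging_tree C A \<longleftrightarrow> A \<subseteq> C \<times> C \<and> C \<noteq> {} \<and> weakly_connected C A \<and>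
     (\<exists>!r. r \<in> C \<and> outdeg A r = 0) \<and>
     (\<forall>v\<in>C. outdeg A v = 0 \<or> outdeg A v = 1)"

definition in_forest :: "real^'n^'n \<Rightarrow> ('n \<times> 'n) set \<Rightarrow> bool" where
  "in_forest W F \<longleftrightarrow> F \<subseteq> arcs W \<and>
     (\<forall>i. converging_tree (weak_comp F i) (F \<inter> (weak_comp F i \<times> weak_comp F i)))"

definition num_trees :: "('n \<times> 'n) set \<Rightarrow> nat" where
  "num_trees F = card (range (weak_comp F))"

definition forest_dim :: "real^'n^'n \<Rightarrow> nat" where
  "forest_dim W = Min (num_trees ` {F. in_forest W F})"

definition subgraph_weight :: "real^'n^'n \<Rightarrow> ('n \<times> 'n) set \<Rightarrow> real" where
  "subgraph_weight W F = (\<Prod>(i,j)\<in>F. W $ i $ j)"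

definition sigma :: "real^'n^'n \<Rightarrow> nat \<Rightarrow> real" where
  "sigma W k = (\<Sum>F\<in>{F. in_forest W F \<and> card F = k}. subgraph_weight W F)"

text \<open>i lies in a tree rooted at j: j is in the weak component of i and has out-degree 0.\<close>
definition forest_matrix :: "real^'n^'n \<Rightarrow> nat \<Rightarrow> real^'n^'n" where
  "forest_matrix W k = (\<chi> i j. \<Sum>F\<in>{F. in_forest W F \<and> card F = k \<and>
        j \<in> weak_comp F i \<and> outdeg F j = 0}. subgraph_weight W F)"

definition norm_max_forest_matrix :: "real^'n^'n \<Rightarrow> real^'n^'n" where
  "norm_max_forest_matrix W =
     (1 / sigma W (CARD('n) - forest_dim W)) *\<^sub>R forest_matrix W (CARD('n) - forest_dim W)"

definition null_space :: "real^'n^'m \<Rightarrow> (real^'n) set" where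
  "null_space A = {x. A *v x = 0}"

definition col_range :: "real^'n^'m \<Rightarrow> (real^'m) set" where
  "col_range A = range (\<lambda>x. A *v x)"

definition mat_pow :: "real^'n^'n \<Rightarrow> nat \<Rightarrow> real^'n^'n" where
  "mat_pow A k = ((\<lambda>B. B ** A) ^^ k) (mat 1)"

definition mat_index :: "real^'n^'n \<Rightarrow> nat" where
  "mat_index A = (LEAST k. rank (mat_pow A (Suc k)) = rank (mat_pow A k))"

definition eigenprojection :: "real^'n^'n \<Rightarrow> real^'n^'n \<Rightarrow> bool" where
  "eigenprojection A B \<longleftrightarrow> B ** B = B \<and>
     col_range B = null_space (mat_pow A (mat_index A)) \<and>
     null_space B = col_range (mat_pow A (mat_index A))"

end

theory Submission
  imports Defs
begin

text \<open>
  Write \<open>Q\<^sub>s\<close> for the matrix of in-forests with \<open>s\<close> arcs and \<open>\<sigma>\<^sub>s\<close> for their total weight.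
  Inserting the arc \<open>i \<rightarrow> k\<close> into an \<open>s\<close>-arc forest in which \<open>i\<close> is a root, for every \<open>k\<close>
  outside the tree of \<open>i\<close>, enumerates each \<open>(s+1)\<close>-arc forest in which \<open>i\<close> is not a root exactly
  once. Summing the \<open>i\<close>-th row of \<open>L Q\<^sub>s\<close> along this bijection gives the matrix-forest identity
  \<open>L Q\<^sub>s = \<sigma>\<^sub>s\<^sub>+\<^sub>1 I - Q\<^sub>s\<^sub>+\<^sub>1\<close>, the contribution of the forests in which \<open>i\<close> is not a root
  cancelling by antisymmetry. As \<open>Q\<^sub>0 = I\<close>, every \<open>Q\<^sub>s\<close> is a polynomial in \<open>L\<close>, and as no
  in-forest has more than \<open>n - d\<close> arcs, \<open>L Q\<^sub>n\<^sub>-\<^sub>d = 0\<close>. Hence \<open>J\<close> satisfies \<open>L J = 0\<close> and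
  \<open>J = I - L Y\<close> with \<open>Y\<close> commuting with \<open>L\<close>, which forces \<open>J\<close> to be the projector onto
  \<open>N(L)\<close> along \<open>R(L)\<close> and \<open>R(L\<^sup>2) = R(L)\<close>. Every maximum in-forest has exactly \<open>d\<close> trees,
  so \<open>tr J = d\<close>, and the trace of an idempotent matrix is its rank.
\<close>

section \<open>Rooted forests as functional graphs\<close>

(* An in-forest encoded by its parent relation: every vertex has at most one outgoing arc and
   reaches a root, i.e. a vertex outside the Domain. By in_forest_iff, this agrees with in_forest. *)
definition forest :: "('a \<times> 'a) set \<Rightarrow> bool" where
  "forest F \<longleftrightarrow> single_valued F \<and> (\<forall>v. \<exists>r. (v, r) \<in> F\<^sup>* \<and> r \<notin> Domain F)"

definition root_of :: "('a \<times> 'a) set \<Rightarrow> 'a \<Rightarrow> 'a" where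
  "root_of F v = (THE r. (v, r) \<in> F\<^sup>* \<and> r \<notin> Domain F)"

lemma rtrancl_from_non_Domain: "(r, x) \<in> F\<^sup>* \<Longrightarrow> r \<notin> Domain F \<Longrightarrow> x = r"
  by (erule converse_rtranclE) auto

lemma single_valued_reachable_root_unique:
  assumes "single_valued F" "(v, r1) \<in> F\<^sup>*" "(v, r2) \<in> F\<^sup>*" "r1 \<notin> Domain F" "r2 \<notin> Domain F"
  shows "r1 = r2"
proof -
  from single_valued_confluent[OF assms(1-3)]
  have "(r1, r2) \<in> F\<^sup>* \<or> (r2, r1) \<in> F\<^sup>*" .
  with assms(4,5) show ?thesis by (auto dest: rtrancl_from_non_Domain)
qed

lemma forest_empty [simp]: "forest {}"
  unfolding forest_def by auto

lemma reaches_root_of_and_root_of_notin_Domain: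
  assumes "forest F"
  shows "(v, root_of F v) \<in> F\<^sup>* \<and> root_of F v \<notin> Domain F"
proof -
  have "\<exists>!r. (v, r) \<in> F\<^sup>* \<and> r \<notin> Domain F"
    using assms single_valued_reachable_root_unique[of F v] unfolding forest_def by blast
  from theI'[OF this] show ?thesis unfolding root_of_def .
qed

lemma reaches_root_of: "forest F \<Longrightarrow> (v, root_of F v) \<in> F\<^sup>*"
  by (drule reaches_root_of_and_root_of_notin_Domain) (rule conjunct1)

lemma root_of_notin_Domain: "forest F \<Longrightarrow> root_of F v \<notin> Domain F"
  by (drule reaches_root_of_and_root_of_notin_Domain) (rule conjunct2)

lemma root_of_eq:
  assumes "forest F" "(v, r) \<in> F\<^sup>*" "r \<notin> Domain F"
  shows "root_of F v = r"
proof -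
  have "single_valued F" using assms(1) forest_def by blast
  from single_valued_reachable_root_unique[OF this reaches_root_of[OF assms(1)] assms(2)]
  show ?thesis using root_of_notin_Domain[OF assms(1)] assms(3) .
qed

lemma root_of_root: "forest F \<Longrightarrow> r \<notin> Domain F \<Longrightarrow> root_of F r = r"
  using root_of_eq[OF _ rtrancl_refl] .

lemma root_of_eq_self_iff: "forest F \<Longrightarrow> root_of F r = r \<longleftrightarrow> r \<notin> Domain F"
  using root_of_root[of F r] root_of_notin_Domain[of F r] by auto

lemma root_of_weakly_connected:
  assumes "forest F" "(u, v) \<in> (F \<union> F\<inverse>)\<^sup>*"
  shows "root_of F u = root_of F v"
  using assms(2)
proof (induction rule: rtrancl_induct)
  case (step y z)
  have arc: "root_of F y = root_of F z" if "(y, z) \<in> F" for y z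
    using reaches_root_of[OF assms(1), of z] root_of_notin_Domain[OF assms(1), of z] that
    by (intro root_of_eq[OF assms(1)]) (auto intro: converse_rtrancl_into_rtrancl)
  from step.hyps(2) have "(y, z) \<in> F \<or> (z, y) \<in> F" by blast
  with step.IH arc[of y z] arc[of z y] show ?case by metis
qed simp

lemma single_valued_weakly_connected_to_root:
  assumes "single_valued F" "r \<notin> Domain F" "(r, x) \<in> (F \<union> F\<inverse>)\<^sup>*"
  shows "(x, r) \<in> F\<^sup>*"
  using assms(3)
proof (induction rule: rtrancl_induct)
  case (step y z)
  show ?case
  proof (cases "(z, y) \<in> F")
    case True
    from True step.IH show ?thesis by (rule converse_rtrancl_into_rtrancl)
  next
    case False
    with step.hyps(2) have "(y, z) \<in> F" by blast
    with step.IH assms(2) obtain y' where "(y, y') \<in> F" "(y', r) \<in> F\<^sup>*"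
      by (auto elim: converse_rtranclE)
    with \<open>(y, z) \<in> F\<close> assms(1) show ?thesis by (auto dest: single_valuedD)
  qed
qed simp

lemma single_valued_cycle_back:
  assumes "single_valued G" "(x, x) \<in> G\<^sup>+" "(x, y) \<in> G\<^sup>*"
  shows "(y, x) \<in> G\<^sup>*"
  using assms(3)
proof (induction rule: rtrancl_induct)
  case (step y z)
  have "\<exists>z'. (y, z') \<in> G \<and> (z', x) \<in> G\<^sup>*"
  proof (cases "y = x")
    case True
    with assms(2) show ?thesis by (simp add: tranclD)
  next
    case False
    with step.IH show ?thesis by (auto elim: converse_rtranclE)
  qed
  with step.hyps(2) assms(1) show ?case by (auto dest: single_valuedD)
qed simp

lemma forest_acyclic:
  assumes "forest F"
  shows "acyclic F"
  unfolding acyclic_def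
proof (intro allI notI)
  fix x assume cyc: "(x, x) \<in> F\<^sup>+"
  have "single_valued F" using assms forest_def by blast
  then have "(root_of F x, x) \<in> F\<^sup>*"
    by (rule single_valued_cycle_back[OF _ cyc reaches_root_of[OF assms]])
  then have "root_of F x = x" using rtrancl_from_non_Domain root_of_notin_Domain[OF assms] by metis
  moreover have "x \<in> Domain F" using tranclD[OF cyc] by blast
  ultimately show False using root_of_notin_Domain[OF assms, of x] by simp
qed

section \<open>In-forests and their trees\<close>

lemma outdeg_eq_0_iff: "outdeg F v = 0 \<longleftrightarrow> v \<notin> Domain (F :: ('n::finite \<times> 'n) set)"
  unfolding outdeg_def by auto

lemma single_valued_iff_outdeg_le_1:
  "single_valued (F :: ('n::finite \<times> 'n) set) \<longleftrightarrow> (\<forall>v. outdeg F v \<le> 1)"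
  unfolding single_valued_def outdeg_def by (auto simp: card_le_Suc0_iff_eq)

lemma weak_comp_self: "i \<in> weak_comp F i"
  unfolding weak_comp_def by simp

lemma weak_comp_step: "x \<in> weak_comp F i \<Longrightarrow> (x, y) \<in> F \<union> F\<inverse> \<Longrightarrow> y \<in> weak_comp F i"
  unfolding weak_comp_def by (auto intro: rtrancl_into_rtrancl)

lemma weak_comp_eq: "j \<in> weak_comp F i \<Longrightarrow> weak_comp F j = weak_comp F i"
proof -
  have sym: "(F \<union> F\<inverse>)\<inverse> = F \<union> F\<inverse>" by auto
  assume "j \<in> weak_comp F i"
  then have "(i, j) \<in> (F \<union> F\<inverse>)\<^sup>*" "(j, i) \<in> (F \<union> F\<inverse>)\<^sup>*"
    unfolding weak_comp_def using rtrancl_converseI[of i j "F \<union> F\<inverse>"] sym by auto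
  then show ?thesis unfolding weak_comp_def by (auto intro: rtrancl_trans)
qed

lemma outdeg_restrict_weak_comp:
  assumes "x \<in> weak_comp F i"
  shows "outdeg (F \<inter> weak_comp F i \<times> weak_comp F i) x = outdeg F x"
proof -
  have "{u. (x, u) \<in> F \<inter> weak_comp F i \<times> weak_comp F i} = {u. (x, u) \<in> F}"
    using assms weak_comp_step[OF assms] by blast
  then show ?thesis unfolding outdeg_def by simp
qed

lemma weak_comp_weakly_connected: "weakly_connected (weak_comp F i) (F \<inter> weak_comp F i \<times> weak_comp F i)"
proof -
  define C where "C = weak_comp F i"
  define E where "E = (F \<inter> C \<times> C) \<union> (F \<inter> C \<times> C)\<inverse>"
  have to_i: "(i, x) \<in> E\<^sup>*" if "(i, x) \<in> (F \<union> F\<inverse>)\<^sup>*" for x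
    using that
  proof (induction rule: rtrancl_induct)
    case (step y z)
    then have "y \<in> C" "z \<in> C" unfolding C_def weak_comp_def by (auto intro: rtrancl_into_rtrancl)
    with step.hyps(2) have "(y, z) \<in> E" unfolding E_def by blast
    with step.IH show ?case by (rule rtrancl_into_rtrancl)
  qed simp
  have "E\<inverse> = E" unfolding E_def by blast
  then have from_i: "(x, i) \<in> E\<^sup>*" if "(i, x) \<in> E\<^sup>*" for x
    using rtrancl_converseI[OF that] by simp
  show ?thesis
    unfolding weakly_connected_def C_def[symmetric] E_def[symmetric]
  proof (intro ballI)
    fix x y assume "x \<in> C" "y \<in> C"
    then have "(i, x) \<in> E\<^sup>*" "(i, y) \<in> E\<^sup>*" using to_i unfolding C_def weak_comp_def by auto
    then show "(x, y) \<in> E\<^sup>*" using from_i rtrancl_trans by metis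
  qed
qed

lemma root_of_in_weak_comp: "forest F \<Longrightarrow> root_of F i \<in> weak_comp F i"
  unfolding weak_comp_def using reaches_root_of in_rtrancl_UnI by fastforce

lemma root_of_eq_iff_weak_comp:
  fixes F :: "('n::finite \<times> 'n) set"
  assumes "forest F"
  shows "root_of F i = j \<longleftrightarrow> j \<in> weak_comp F i \<and> outdeg F j = 0"
  using root_of_in_weak_comp[OF assms] root_of_notin_Domain[OF assms] root_of_root[OF assms]
    root_of_weakly_connected[OF assms, of i]
  unfolding weak_comp_def by (auto simp: outdeg_eq_0_iff)

lemma forest_if_weak_comps_converging_trees:
  fixes F :: "('n::finite \<times> 'n) set"
  assumes trees: "\<And>i. converging_tree (weak_comp F i) (F \<inter> weak_comp F i \<times> weak_comp F i)"
  shows "forest F"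
proof -
  have "outdeg F v \<le> 1" for v
    using trees[of v] weak_comp_self[of v F] outdeg_restrict_weak_comp[of v F v]
    unfolding converging_tree_def by fastforce
  then have sv: "single_valued F" by (simp add: single_valued_iff_outdeg_le_1)
  have "\<exists>r. (v, r) \<in> F\<^sup>* \<and> r \<notin> Domain F" for v
  proof -
    obtain r where r: "r \<in> weak_comp F v" "outdeg (F \<inter> weak_comp F v \<times> weak_comp F v) r = 0"
      using trees[of v] unfolding converging_tree_def by blast
    then have "r \<notin> Domain F" using outdeg_restrict_weak_comp outdeg_eq_0_iff by metis
    moreover have "(r, v) \<in> (F \<union> F\<inverse>)\<^sup>*"
      using r(1) rtrancl_converseI[of v r "F \<union> F\<inverse>"] unfolding weak_comp_def
      by (simp add: converse_Un sup_commute)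
    ultimately show ?thesis using single_valued_weakly_connected_to_root[OF sv] by blast
  qed
  with sv show ?thesis unfolding forest_def by blast
qed

lemma converging_tree_weak_comp:
  fixes F :: "('n::finite \<times> 'n) set"
  assumes "forest F"
  shows "converging_tree (weak_comp F i) (F \<inter> weak_comp F i \<times> weak_comp F i)"
proof -
  define C where "C = weak_comp F i"
  have outdeg_C: "outdeg (F \<inter> C \<times> C) v = outdeg F v" if "v \<in> C" for v
    using that unfolding C_def by (rule outdeg_restrict_weak_comp)
  have "\<exists>!r. r \<in> C \<and> outdeg (F \<inter> C \<times> C) r = 0"
  proof (rule ex1I[of _ "root_of F i"])
    have "root_of F i \<in> C \<and> outdeg F (root_of F i) = 0"
      using root_of_eq_iff_weak_comp[OF assms, of i "root_of F i"] unfolding C_def by simp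
    then show "root_of F i \<in> C \<and> outdeg (F \<inter> C \<times> C) (root_of F i) = 0"
      using outdeg_C by simp
  next
    fix r assume "r \<in> C \<and> outdeg (F \<inter> C \<times> C) r = 0"
    then have "r \<in> C \<and> outdeg F r = 0" using outdeg_C by metis
    then show "r = root_of F i"
      using root_of_eq_iff_weak_comp[OF assms, of i r] unfolding C_def by simp
  qed
  moreover have "outdeg (F \<inter> C \<times> C) v = 0 \<or> outdeg (F \<inter> C \<times> C) v = 1" if "v \<in> C" for v
  proof -
    have "single_valued F" using assms unfolding forest_def by blast
    then have "outdeg F v \<le> 1" using single_valued_iff_outdeg_le_1 by blast
    then show ?thesis using outdeg_C[OF that] by linarith
  qed
  moreover have "C \<noteq> {}" using weak_comp_self[of i F] unfolding C_def by blast
  ultimately show ?thesis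
    using weak_comp_weakly_connected[of F i, folded C_def]
    unfolding converging_tree_def C_def[symmetric] by blast
qed

lemma in_forest_iff: "in_forest W F \<longleftrightarrow> F \<subseteq> arcs W \<and> forest F"
  unfolding in_forest_def
  using converging_tree_weak_comp forest_if_weak_comps_converging_trees by metis

lemma card_plus_card_roots:
  fixes F :: "('n::finite \<times> 'n) set"
  assumes "forest F"
  shows "card F + card (- Domain F) = CARD('n)"
proof -
  have "inj_on fst F"
    using assms unfolding forest_def single_valued_def inj_on_def by auto
  then have "card F = card (Domain F)" by (metis card_image fst_eq_Domain)
  moreover have "card (Domain F) + card (- Domain F) = CARD('n)"
    by (subst card_Un_disjoint[symmetric]) auto
  ultimately show ?thesis by simp
qed

lemma num_trees_forest:
  assumes "forest F"
  shows "num_trees F = card (- Domain F)"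
proof -
  have "bij_betw (weak_comp F) (- Domain F) (range (weak_comp F))"
  proof (rule bij_betw_imageI)
    show "inj_on (weak_comp F) (- Domain F)"
    proof (rule inj_onI)
      fix x y assume "x \<in> - Domain F" "y \<in> - Domain F" "weak_comp F x = weak_comp F y"
      then have "(x, y) \<in> (F \<union> F\<inverse>)\<^sup>*" using weak_comp_self[of y F] unfolding weak_comp_def by auto
      then have "root_of F x = root_of F y" by (rule root_of_weakly_connected[OF assms])
      with \<open>x \<in> - Domain F\<close> \<open>y \<in> - Domain F\<close> show "x = y"
        using root_of_root[OF assms] by simp
    qed
    have "weak_comp F i \<in> weak_comp F ` (- Domain F)" for i
      using weak_comp_eq[OF root_of_in_weak_comp[OF assms, of i]] root_of_notin_Domain[OF assms, of i]
      by (intro image_eqI[of _ _ "root_of F i"]) auto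
    then show "weak_comp F ` (- Domain F) = range (weak_comp F)" by auto
  qed
  then show ?thesis unfolding num_trees_def by (metis bij_betw_same_card)
qed

lemma num_trees_pos:
  fixes F :: "('n::finite \<times> 'n) set"
  assumes "forest F"
  shows "num_trees F \<ge> 1"
proof -
  have "- Domain F \<noteq> {}" using root_of_notin_Domain[OF assms] by blast
  then show ?thesis by (simp add: num_trees_forest[OF assms] Suc_le_eq card_gt_0_iff)
qed

lemma card_plus_num_trees:
  fixes F :: "('n::finite \<times> 'n) set"
  assumes "forest F"
  shows "card F + num_trees F = CARD('n)"
  using card_plus_card_roots[OF assms] by (simp add: num_trees_forest[OF assms])

section \<open>Forests of the digraph and the arc out of a vertex\<close>

lemma forest_insert_arc_from_root:
  assumes fo: "forest F" and i: "i \<notin> Domain F" and k: "root_of F k \<noteq> i"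
  shows "forest (insert (i, k) F)"
    and "root_of (insert (i, k) F) v = (if root_of F v = i then root_of F k else root_of F v)"
proof -
  define G where "G = insert (i, k) F"
  define r where "r = (\<lambda>v. if root_of F v = i then root_of F k else root_of F v)"
  have sv: "single_valued G"
    using fo i unfolding G_def forest_def single_valued_def by blast
  have FG: "F\<^sup>* \<subseteq> G\<^sup>*" unfolding G_def by (simp add: rtrancl_mono subset_insertI)
  have root: "r v \<notin> Domain G" for v
    using root_of_notin_Domain[OF fo] k unfolding G_def r_def by auto
  have reach: "(v, r v) \<in> G\<^sup>*" for v
  proof (cases "root_of F v = i")
    case True
    have "(v, i) \<in> G\<^sup>*" "(k, root_of F k) \<in> G\<^sup>*" using reaches_root_of[OF fo] True FG by auto
    moreover have "(i, k) \<in> G" unfolding G_def by simp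
    ultimately have "(v, root_of F k) \<in> G\<^sup>*" by (meson rtrancl.rtrancl_into_rtrancl rtrancl_trans)
    with True show ?thesis unfolding r_def by simp
  next
    case False
    then show ?thesis unfolding r_def using reaches_root_of[OF fo] FG by auto
  qed
  have "forest G" unfolding forest_def using sv root reach by blast
  then show "forest (insert (i, k) F)" unfolding G_def .
  show "root_of (insert (i, k) F) v = r v"
    using root_of_eq[OF \<open>forest G\<close> reach root] unfolding G_def .
qed

lemma forest_remove_arc:
  assumes fo: "forest G" and ip: "(i, p) \<in> G"
  shows "forest (G - {(i, p)})" and "i \<notin> Domain (G - {(i, p)})" and "root_of (G - {(i, p)}) p \<noteq> i"
proof -
  define F where "F = G - {(i, p)}"
  have svG: "single_valued G" using fo forest_def by blast
  then have sv: "single_valued F" unfolding F_def by (rule single_valued_subset[rotated]) blast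
  show i: "i \<notin> Domain (G - {(i, p)})" using svG ip by (auto dest: single_valuedD)
  have reach: "\<exists>r'. (v, r') \<in> F\<^sup>* \<and> r' \<notin> Domain F" if "(v, r) \<in> G\<^sup>*" "r \<notin> Domain G" for v r
    using that
  proof (induction v rule: converse_rtrancl_induct)
    case base
    then show ?case unfolding F_def by blast
  next
    case (step v x)
    show ?case
    proof (cases "(v, x) = (i, p)")
      case True
      with i show ?thesis unfolding F_def by blast
    next
      case False
      with step show ?thesis unfolding F_def by (meson DiffI converse_rtrancl_into_rtrancl singletonD)
    qed
  qed
  have foF: "forest F"
    unfolding forest_def using sv reach reaches_root_of[OF fo] root_of_notin_Domain[OF fo] by blast
  then show "forest (G - {(i, p)})" unfolding F_def .
  show "root_of (G - {(i, p)}) p \<noteq> i"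
  proof
    assume "root_of (G - {(i, p)}) p = i"
    then have "(p, i) \<in> G\<^sup>*"
      using reaches_root_of[OF foF, of p] rtrancl_mono[of F G] unfolding F_def by auto
    with ip have "(i, i) \<in> G\<^sup>+" by (rule rtrancl_into_trancl2)
    with forest_acyclic[OF fo] show False unfolding acyclic_def by blast
  qed
qed

definition forests :: "real^'n^'n \<Rightarrow> nat \<Rightarrow> ('n \<times> 'n) set set" where
  "forests W s = {F. in_forest W F \<and> card F = s}"

definition attach_targets :: "real^'n^'n \<Rightarrow> 'n \<Rightarrow> ('n \<times> 'n) set \<Rightarrow> 'n set" where
  "attach_targets W i F = {k. 0 < W $ i $ k \<and> root_of F k \<noteq> i}"

lemma forest_if_in_forests: "F \<in> forests W s \<Longrightarrow> forest F"
  unfolding forests_def in_forest_iff by blast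

lemma forests_0: "forests W 0 = {{}}"
  unfolding forests_def in_forest_iff by auto

lemma sigma_eq_sum_forests: "sigma W s = (\<Sum>F\<in>forests W s. subgraph_weight W F)"
  unfolding sigma_def forests_def ..

lemma forest_matrix_eq_sum_forests:
  "forest_matrix W s $ i $ j = (\<Sum>F\<in>forests W s. of_bool (root_of F i = j) * subgraph_weight W F)"
proof -
  have "{F. in_forest W F \<and> card F = s \<and> j \<in> weak_comp F i \<and> outdeg F j = 0}
      = {F \<in> forests W s. root_of F i = j}"
  proof -
    have "(j \<in> weak_comp F i \<and> outdeg F j = 0) \<longleftrightarrow> root_of F i = j" if "in_forest W F" for F
      using that by (simp add: in_forest_iff root_of_eq_iff_weak_comp)
    then show ?thesis unfolding forests_def by auto
  qed
  then show ?thesis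
    unfolding forest_matrix_def by (auto simp: sum.inter_filter of_bool_def intro!: sum.cong)
qed

lemma subgraph_weight_insert:
  "(i, k) \<notin> F \<Longrightarrow> subgraph_weight W (insert (i, k) F) = W $ i $ k * subgraph_weight W F"
  unfolding subgraph_weight_def by simp

lemma bij_betw_insert_arc_from:
  "bij_betw (\<lambda>(F, k). insert (i, k) F)
     (SIGMA F:{F \<in> forests W s. i \<notin> Domain F}. attach_targets W i F)
     {G \<in> forests W (Suc s). i \<in> Domain G}"
  (is "bij_betw ?f ?S ?T")
proof (rule bij_betw_imageI)
  show "inj_on ?f ?S"
  proof (rule inj_onI, clarify)
    fix F k F' k'
    assume "i \<notin> Domain F" "i \<notin> Domain F'" and eq: "insert (i, k) F = insert (i, k') F'"
    then have "(i, k) \<notin> F'" "(i, k') \<notin> F" "(i, k) \<notin> F" "(i, k') \<notin> F'" by auto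
    with eq have "k = k'" by blast
    with eq \<open>(i, k) \<notin> F\<close> \<open>(i, k') \<notin> F'\<close> show "F = F' \<and> k = k'"
      by (metis insert_ident)
  qed
  have "?f x \<in> ?T" if "x \<in> ?S" for x
  proof -
    obtain F k where x: "x = (F, k)" by fastforce
    have "forest F" "F \<subseteq> arcs W" "card F = s" "i \<notin> Domain F" "0 < W $ i $ k" "root_of F k \<noteq> i"
      using that unfolding x forests_def in_forest_iff attach_targets_def by auto
    moreover from \<open>i \<notin> Domain F\<close> have "(i, k) \<notin> F" by blast
    ultimately show ?thesis
      using forest_insert_arc_from_root(1)[of F i k]
      unfolding x forests_def in_forest_iff arcs_def by auto
  qed
  moreover have "G \<in> ?f ` ?S" if G: "G \<in> ?T" for G
  proof -
    obtain p where ip: "(i, p) \<in> G" using G by blast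
    have "forest G" "G \<subseteq> arcs W" "card G = Suc s" using G unfolding forests_def in_forest_iff by auto
    then have "(G - {(i, p)}, p) \<in> ?S"
      using forest_remove_arc[of G i p] ip
      unfolding forests_def attach_targets_def in_forest_iff arcs_def by auto
    moreover have "G = ?f (G - {(i, p)}, p)" using ip by auto
    ultimately show ?thesis by (rule rev_image_eqI)
  qed
  ultimately show "?f ` ?S = ?T" by blast
qed

lemma sum_forests_with_arc_from:
  "(\<Sum>G\<in>{G \<in> forests W (Suc s). i \<in> Domain G}. f G)
     = (\<Sum>F\<in>{F \<in> forests W s. i \<notin> Domain F}. \<Sum>k\<in>attach_targets W i F. f (insert (i, k) F))"
proof -
  have "(\<Sum>G\<in>{G \<in> forests W (Suc s). i \<in> Domain G}. f G)
      = (\<Sum>x\<in>(SIGMA F:{F \<in> forests W s. i \<notin> Domain F}. attach_targets W i F). f (case x of (F, k) \<Rightarrow> insert (i, k) F))"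
    by (rule sum.reindex_bij_betw[OF bij_betw_insert_arc_from, symmetric])
  also have "\<dots> = (\<Sum>F\<in>{F \<in> forests W s. i \<notin> Domain F}. \<Sum>k\<in>attach_targets W i F. f (insert (i, k) F))"
    by (subst sum.Sigma) (auto simp: split_def)
  finally show ?thesis .
qed

section \<open>The matrix-forest identity\<close>

lemma laplacian_mult_eq:
  "(laplacian W ** M) $ i $ j = (\<Sum>k\<in>UNIV. W $ i $ k * (M $ i $ j - M $ k $ j))"
proof -
  have "(laplacian W ** M) $ i $ j = laplacian W $ i $ i * M $ i $ j + (\<Sum>k\<in>UNIV - {i}. laplacian W $ i $ k * M $ k $ j)"
    unfolding matrix_matrix_mult_def by (simp add: sum.remove)
  also have "\<dots> = (\<Sum>k\<in>UNIV - {i}. W $ i $ k * (M $ i $ j - M $ k $ j))"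
    by (simp add: laplacian_def sum_distrib_right right_diff_distrib sum_subtractf sum_negf)
  also have "\<dots> = (\<Sum>k\<in>UNIV. W $ i $ k * (M $ i $ j - M $ k $ j))"
    by (simp add: sum.remove[of UNIV i "\<lambda>k. W $ i $ k * (M $ i $ j - M $ k $ j)"])
  finally show ?thesis .
qed

lemma sum_antisymmetric_zero:
  fixes c a :: "'a \<Rightarrow> real"
  assumes "finite S"
  shows "(\<Sum>p\<in>S. c p * (\<Sum>k\<in>S. c k * (a p - a k))) = 0"
proof -
  have "(\<Sum>p\<in>S. c p * (\<Sum>k\<in>S. c k * (a p - a k)))
      = (\<Sum>p\<in>S. \<Sum>k\<in>S. c p * c k * a p) - (\<Sum>p\<in>S. \<Sum>k\<in>S. c p * c k * a k)"
    by (simp add: sum_distrib_left right_diff_distrib sum_subtractf algebra_simps)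
  also have "(\<Sum>p\<in>S. \<Sum>k\<in>S. c p * c k * a k) = (\<Sum>p\<in>S. \<Sum>k\<in>S. c p * c k * a p)"
    by (subst sum.swap) (simp add: mult.commute)
  finally show ?thesis by simp
qed

lemma sum_row_restrict_attach_targets:
  assumes nonneg: "\<forall>i j. W $ i $ j \<ge> 0" and f: "\<And>k. root_of F k = i \<Longrightarrow> f k = f i"
  shows "(\<Sum>k\<in>UNIV. W $ i $ k * (f i - f k)) = (\<Sum>k\<in>attach_targets W i F. W $ i $ k * (f i - f k))"
proof (rule sum.mono_neutral_right)
  show "\<forall>k\<in>UNIV - attach_targets W i F. W $ i $ k * (f i - f k) = 0"
    using nonneg f unfolding attach_targets_def by (auto simp: not_less intro: antisym)
qed auto

lemma weighted_row_forest_rooted_at: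
  fixes W :: "real^'n^'n"
  assumes nonneg: "\<forall>i j. W $ i $ j \<ge> 0" and fo: "forest F" and i: "i \<notin> Domain F"
  shows "subgraph_weight W F * (\<Sum>k\<in>UNIV. W $ i $ k * (of_bool (root_of F i = j) - of_bool (root_of F k = j)))
    = (\<Sum>k\<in>attach_targets W i F.
        subgraph_weight W (insert (i, k) F) * (of_bool (i = j) - of_bool (root_of (insert (i, k) F) i = j)))"
proof -
  have root_i: "root_of F i = i" using root_of_root[OF fo i] .
  have "(\<Sum>k\<in>UNIV. W $ i $ k * (of_bool (root_of F i = j) - of_bool (root_of F k = j)))
      = (\<Sum>k\<in>attach_targets W i F. W $ i $ k * (of_bool (root_of F i = j) - of_bool (root_of F k = j)))"
    by (rule sum_row_restrict_attach_targets[OF nonneg]) (simp add: root_i)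
  also have "subgraph_weight W F * \<dots> = (\<Sum>k\<in>attach_targets W i F.
      subgraph_weight W (insert (i, k) F) * (of_bool (i = j) - of_bool (root_of (insert (i, k) F) i = j)))"
    unfolding sum_distrib_left
  proof (rule sum.cong[OF refl])
    fix k assume "k \<in> attach_targets W i F"
    then have "root_of (insert (i, k) F) i = root_of F k"
      using forest_insert_arc_from_root(2)[OF fo i] root_i unfolding attach_targets_def by simp
    moreover have "(i, k) \<notin> F" using i by blast
    ultimately show "subgraph_weight W F * (W $ i $ k * (of_bool (root_of F i = j) - of_bool (root_of F k = j)))
        = subgraph_weight W (insert (i, k) F) * (of_bool (i = j) - of_bool (root_of (insert (i, k) F) i = j))"
      using root_i by (simp add: subgraph_weight_insert)
  qed
  finally show ?thesis .
qed

lemma sum_forests_rooted_at_laplacian_row: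
  fixes W :: "real^'n^'n"
  assumes nonneg: "\<forall>i j. W $ i $ j \<ge> 0"
  shows "(\<Sum>F\<in>{F \<in> forests W s. i \<notin> Domain F}. subgraph_weight W F *
            (\<Sum>k\<in>UNIV. W $ i $ k * (of_bool (root_of F i = j) - of_bool (root_of F k = j))))
       = (\<Sum>G\<in>forests W (Suc s). subgraph_weight W G * (of_bool (i = j) - of_bool (root_of G i = j)))"
    (is "(\<Sum>F\<in>?R. _) = (\<Sum>G\<in>_. ?g G)")
proof -
  have "(\<Sum>F\<in>?R. subgraph_weight W F *
            (\<Sum>k\<in>UNIV. W $ i $ k * (of_bool (root_of F i = j) - of_bool (root_of F k = j))))
      = (\<Sum>F\<in>?R. \<Sum>k\<in>attach_targets W i F. ?g (insert (i, k) F))"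
    by (intro sum.cong refl weighted_row_forest_rooted_at[OF nonneg]) (auto intro: forest_if_in_forests)
  also have "\<dots> = (\<Sum>G\<in>{G \<in> forests W (Suc s). i \<in> Domain G}. ?g G)"
    by (rule sum_forests_with_arc_from[symmetric])
  also have "\<dots> = (\<Sum>G\<in>forests W (Suc s). ?g G)"
  proof (rule sum.mono_neutral_left)
    show "\<forall>G\<in>forests W (Suc s) - {G \<in> forests W (Suc s). i \<in> Domain G}. ?g G = 0"
    proof
      fix G assume "G \<in> forests W (Suc s) - {G \<in> forests W (Suc s). i \<in> Domain G}"
      then have "forest G" "i \<notin> Domain G" using forest_if_in_forests by auto
      then have "root_of G i = i" by (rule root_of_root)
      then show "?g G = 0" by simp
    qed
  qed auto
  finally show ?thesis .
qed

lemma weighted_row_forest_insert_arc: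
  fixes W :: "real^'n^'n"
  assumes nonneg: "\<forall>i j. W $ i $ j \<ge> 0" and fo: "forest H" and i: "i \<notin> Domain H"
    and p: "p \<in> attach_targets W i H"
  shows "subgraph_weight W (insert (i, p) H) * (\<Sum>k\<in>UNIV. W $ i $ k *
      (of_bool (root_of (insert (i, p) H) i = j) - of_bool (root_of (insert (i, p) H) k = j)))
    = subgraph_weight W H * (W $ i $ p *
      (\<Sum>k\<in>attach_targets W i H. W $ i $ k * (of_bool (root_of H p = j) - of_bool (root_of H k = j))))"
proof -
  let ?G = "insert (i, p) H" and ?e = "\<lambda>F k. of_bool (root_of F k = j) :: real"
  have root_G: "root_of ?G v = (if root_of H v = i then root_of H p else root_of H v)" for v
    using p forest_insert_arc_from_root(2)[OF fo i] unfolding attach_targets_def by simp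
  have root_G_i: "root_of ?G i = root_of H p" using root_G[of i] root_of_root[OF fo i] by simp
  have "(\<Sum>k\<in>UNIV. W $ i $ k * (?e ?G i - ?e ?G k))
      = (\<Sum>k\<in>attach_targets W i H. W $ i $ k * (?e ?G i - ?e ?G k))"
    by (rule sum_row_restrict_attach_targets[OF nonneg]) (simp add: root_G root_G_i root_of_root[OF fo i])
  also have "\<dots> = (\<Sum>k\<in>attach_targets W i H. W $ i $ k * (?e H p - ?e H k))"
    using root_G root_G_i unfolding attach_targets_def by (intro sum.cong) auto
  moreover have "(i, p) \<notin> H" using i by blast
  ultimately show ?thesis by (simp add: subgraph_weight_insert)
qed

text \<open>A forest in which \<open>i\<close> is not a root is \<open>H + (i, p)\<close> with \<open>i\<close> a root of \<open>H\<close>; summed over \<open>p\<close>,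
  its row becomes a double sum over \<open>p, k \<in> attach_targets W i H\<close> that is antisymmetric in \<open>p, k\<close>.\<close>

lemma sum_forests_not_rooted_at_laplacian_row:
  fixes W :: "real^'n^'n"
  assumes nonneg: "\<forall>i j. W $ i $ j \<ge> 0"
  shows "(\<Sum>F\<in>{F \<in> forests W s. i \<in> Domain F}. subgraph_weight W F *
            (\<Sum>k\<in>UNIV. W $ i $ k * (of_bool (root_of F i = j) - of_bool (root_of F k = j)))) = 0"
proof (cases s)
  case 0
  then have empty: "{F \<in> forests W s. i \<in> Domain F} = {}" unfolding forests_def by auto
  show ?thesis unfolding empty by simp
next
  case (Suc s')
  let ?e = "\<lambda>F k. of_bool (root_of F k = j) :: real"
  let ?row = "\<lambda>H p. W $ i $ p * (\<Sum>k\<in>attach_targets W i H. W $ i $ k * (?e H p - ?e H k))"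
  have "(\<Sum>p\<in>attach_targets W i H. subgraph_weight W (insert (i, p) H) *
          (\<Sum>k\<in>UNIV. W $ i $ k * (?e (insert (i, p) H) i - ?e (insert (i, p) H) k)))
      = subgraph_weight W H * (\<Sum>p\<in>attach_targets W i H. ?row H p)"
    if H: "H \<in> {F \<in> forests W s'. i \<notin> Domain F}" for H
  proof -
    have "(\<Sum>p\<in>attach_targets W i H. subgraph_weight W (insert (i, p) H) *
          (\<Sum>k\<in>UNIV. W $ i $ k * (?e (insert (i, p) H) i - ?e (insert (i, p) H) k)))
        = (\<Sum>p\<in>attach_targets W i H. subgraph_weight W H * ?row H p)"
      using H by (intro sum.cong refl weighted_row_forest_insert_arc[OF nonneg]) (auto intro: forest_if_in_forests)
    also have "\<dots> = subgraph_weight W H * (\<Sum>p\<in>attach_targets W i H. ?row H p)"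
      by (rule sum_distrib_left[symmetric])
    finally show ?thesis .
  qed
  then have "(\<Sum>F\<in>{F \<in> forests W s. i \<in> Domain F}. subgraph_weight W F * (\<Sum>k\<in>UNIV. W $ i $ k * (?e F i - ?e F k)))
      = (\<Sum>H\<in>{F \<in> forests W s'. i \<notin> Domain F}. subgraph_weight W H * (\<Sum>p\<in>attach_targets W i H. ?row H p))"
    unfolding Suc sum_forests_with_arc_from by (rule sum.cong[OF refl])
  also have "\<dots> = 0" by (simp add: sum_antisymmetric_zero)
  finally show ?thesis .
qed

theorem laplacian_mult_forest_matrix:
  fixes W :: "real^'n^'n"
  assumes nonneg: "\<forall>i j. W $ i $ j \<ge> 0"
  shows "laplacian W ** forest_matrix W s = sigma W (Suc s) *\<^sub>R mat 1 - forest_matrix W (Suc s)"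
proof -
  have "(laplacian W ** forest_matrix W s) $ i $ j
      = of_bool (i = j) * sigma W (Suc s) - forest_matrix W (Suc s) $ i $ j" for i j
  proof -
    let ?e = "\<lambda>F k. of_bool (root_of F k = j) :: real"
    let ?g = "\<lambda>F. subgraph_weight W F * (\<Sum>k\<in>UNIV. W $ i $ k * (?e F i - ?e F k))"
    have "forest_matrix W s $ i $ j - forest_matrix W s $ k $ j
        = (\<Sum>F\<in>forests W s. subgraph_weight W F * (?e F i - ?e F k))" for k
      unfolding forest_matrix_eq_sum_forests sum_subtractf[symmetric]
      by (rule sum.cong) (simp_all add: algebra_simps)
    then have "(laplacian W ** forest_matrix W s) $ i $ j
        = (\<Sum>k\<in>UNIV. \<Sum>F\<in>forests W s. W $ i $ k * (subgraph_weight W F * (?e F i - ?e F k)))"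
      by (simp only: laplacian_mult_eq sum_distrib_left)
    also have "\<dots> = (\<Sum>F\<in>forests W s. ?g F)"
      by (subst sum.swap) (simp only: sum_distrib_left mult.left_commute)
    also have "\<dots> = (\<Sum>F\<in>{F \<in> forests W s. i \<notin> Domain F}. ?g F) + (\<Sum>F\<in>{F \<in> forests W s. i \<in> Domain F}. ?g F)"
      by (subst sum.union_disjoint[symmetric]) (auto intro: sum.cong)
    also have "\<dots> = (\<Sum>G\<in>forests W (Suc s). subgraph_weight W G * (of_bool (i = j) - ?e G i))"
      using sum_forests_rooted_at_laplacian_row[OF nonneg] sum_forests_not_rooted_at_laplacian_row[OF nonneg]
      by simp
    also have "\<dots> = of_bool (i = j) * sigma W (Suc s) - forest_matrix W (Suc s) $ i $ j"
      by (simp add: sigma_eq_sum_forests forest_matrix_eq_sum_forests right_diff_distrib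
          sum_subtractf sum_distrib_left mult.commute)
    finally show ?thesis .
  qed
  then show ?thesis by (simp add: vec_eq_iff mat_def)
qed

lemma forest_matrix_0: "forest_matrix W 0 = mat 1"
  by (simp add: vec_eq_iff mat_def forest_matrix_eq_sum_forests forests_0 subgraph_weight_def
      root_of_root[OF forest_empty])

lemma matrix_diff_ldistrib: "(A::'a::ring_1^'n^'m) ** (B - C) = A ** B - A ** C"
  by (simp add: matrix_matrix_mult_def vec_eq_iff right_diff_distrib sum_subtractf)

lemma matrix_diff_rdistrib: "((A::'a::ring_1^'n^'m) - B) ** C = A ** C - B ** C"
  by (simp add: matrix_matrix_mult_def vec_eq_iff left_diff_distrib sum_subtractf)

lemma laplacian_commute_forest_matrix:
  fixes W :: "real^'n^'n"
  assumes nonneg: "\<forall>i j. W $ i $ j \<ge> 0"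
  shows "laplacian W ** forest_matrix W s = forest_matrix W s ** laplacian W"
proof (induction s)
  case 0
  show ?case by (simp add: forest_matrix_0)
next
  case (Suc s)
  let ?L = "laplacian W" and ?Q = "forest_matrix W s" and ?\<sigma> = "sigma W (Suc s)"
  have Q: "forest_matrix W (Suc s) = ?\<sigma> *\<^sub>R mat 1 - ?L ** ?Q"
    using laplacian_mult_forest_matrix[OF nonneg, of s] by simp
  have "?L ** (?\<sigma> *\<^sub>R mat 1 - ?L ** ?Q) = ?\<sigma> *\<^sub>R ?L - ?L ** (?Q ** ?L)"
    by (simp add: matrix_diff_ldistrib matrix_scalar_ac matrix_mul_assoc Suc.IH)
  also have "\<dots> = (?\<sigma> *\<^sub>R mat 1 - ?L ** ?Q) ** ?L"
    by (simp add: matrix_diff_rdistrib matrix_mul_assoc flip: scalar_matrix_assoc)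
  finally show ?case unfolding Q .
qed

section \<open>Maximum in-forests\<close>

lemma forest_dim_attained: "\<exists>F. in_forest W F \<and> num_trees F = forest_dim W"
proof -
  have "forest_dim W \<in> num_trees ` {F. in_forest W F}"
    unfolding forest_dim_def by (rule Min_in) (auto simp: in_forest_iff intro: exI[of _ "{}"])
  then show ?thesis by auto
qed

lemma forest_dim_le: "in_forest W F \<Longrightarrow> forest_dim W \<le> num_trees F"
  unfolding forest_dim_def by (rule Min_le) auto

lemma forest_dim_ge_1:
  fixes W :: "real^'n^'n"
  shows "forest_dim W \<ge> 1"
proof -
  obtain F where "in_forest W F" "num_trees F = forest_dim W" using forest_dim_attained by blast
  then show ?thesis using num_trees_pos[of F] by (simp add: in_forest_iff)
qed

lemma card_in_forest_le:
  fixes W :: "real^'n^'n"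
  assumes "in_forest W F"
  shows "card F \<le> CARD('n) - forest_dim W"
proof -
  have "card F + num_trees F = CARD('n)" using assms card_plus_num_trees in_forest_iff by blast
  with forest_dim_le[OF assms] show ?thesis by linarith
qed

lemma forests_max_nonempty:
  fixes W :: "real^'n^'n"
  shows "forests W (CARD('n) - forest_dim W) \<noteq> {}"
proof -
  obtain F where "in_forest W F" "num_trees F = forest_dim W" using forest_dim_attained by blast
  moreover from this have "card F + forest_dim W = CARD('n)"
    using card_plus_num_trees[of F] by (simp add: in_forest_iff)
  ultimately show ?thesis unfolding forests_def by (auto intro!: exI[of _ F])
qed

lemma forests_beyond_max:
  fixes W :: "real^'n^'n"
  shows "forests W (Suc (CARD('n) - forest_dim W)) = {}"
  using card_in_forest_le[of W] unfolding forests_def by fastforce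

lemma subgraph_weight_pos: "in_forest W F \<Longrightarrow> subgraph_weight W F > 0"
  unfolding in_forest_iff subgraph_weight_def arcs_def by (auto intro!: prod_pos)

lemma sigma_max_pos:
  fixes W :: "real^'n^'n"
  shows "sigma W (CARD('n) - forest_dim W) > 0"
  unfolding sigma_eq_sum_forests using forests_max_nonempty
  by (intro sum_pos) (auto simp: forests_def subgraph_weight_pos)

lemma laplacian_mult_forest_matrix_max:
  fixes W :: "real^'n^'n"
  assumes nonneg: "\<forall>i j. W $ i $ j \<ge> 0"
  shows "laplacian W ** forest_matrix W (CARD('n) - forest_dim W) = 0"
  using laplacian_mult_forest_matrix[OF nonneg, of "CARD('n) - forest_dim W"]
  by (simp add: sigma_eq_sum_forests forest_matrix_eq_sum_forests forests_beyond_max vec_eq_iff)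

lemma trace_forest_matrix_max:
  fixes W :: "real^'n^'n"
  shows "trace (forest_matrix W (CARD('n) - forest_dim W)) = forest_dim W * sigma W (CARD('n) - forest_dim W)"
proof -
  let ?m = "CARD('n) - forest_dim W"
  have roots: "card {i. root_of F i = i} = forest_dim W" if "F \<in> forests W ?m" for F
  proof -
    have fo: "forest F" and "card F = ?m" using that forest_if_in_forests unfolding forests_def by auto
    moreover have "{i. root_of F i = i} = - Domain F" by (auto simp: root_of_eq_self_iff[OF fo])
    moreover have "forest_dim W \<le> CARD('n)"
      using forest_dim_le[of W F] card_plus_num_trees[OF fo] \<open>F \<in> forests W ?m\<close>
      unfolding forests_def by simp
    ultimately show ?thesis using card_plus_card_roots[OF fo] by simp
  qed
  have "trace (forest_matrix W ?m) = (\<Sum>F\<in>forests W ?m. \<Sum>i\<in>UNIV. of_bool (root_of F i = i) * subgraph_weight W F)"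
    unfolding trace_def forest_matrix_eq_sum_forests by (rule sum.swap)
  also have "\<dots> = (\<Sum>F\<in>forests W ?m. forest_dim W * subgraph_weight W F)"
    by (rule sum.cong[OF refl]) (simp add: roots flip: sum_distrib_right)
  finally show ?thesis by (simp add: sigma_eq_sum_forests sum_distrib_left)
qed

lemma laplacian_mult_norm_max_forest_matrix:
  fixes W :: "real^'n^'n"
  assumes nonneg: "\<forall>i j. W $ i $ j \<ge> 0"
  shows "laplacian W ** norm_max_forest_matrix W = 0"
  unfolding norm_max_forest_matrix_def
  by (simp add: matrix_scalar_ac laplacian_mult_forest_matrix_max[OF nonneg] flip: scalar_matrix_assoc)

lemma norm_max_forest_matrix_eq:
  fixes W :: "real^'n^'n"
  assumes nonneg: "\<forall>i j. W $ i $ j \<ge> 0"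
  obtains Y where "norm_max_forest_matrix W = mat 1 - laplacian W ** Y"
    and "laplacian W ** Y = Y ** laplacian W"
proof (cases "CARD('n) - forest_dim W")
  case 0
  have "sigma W 0 = 1" by (simp add: sigma_eq_sum_forests forests_0 subgraph_weight_def)
  then have "norm_max_forest_matrix W = mat 1"
    unfolding norm_max_forest_matrix_def 0 by (simp add: forest_matrix_0)
  then show ?thesis by (intro that[of 0]) simp_all
next
  case (Suc m)
  let ?\<sigma> = "sigma W (CARD('n) - forest_dim W)"
  define Y where "Y = (1 / ?\<sigma>) *\<^sub>R forest_matrix W m"
  have "laplacian W ** Y = (1 / ?\<sigma>) *\<^sub>R (?\<sigma> *\<^sub>R mat 1 - forest_matrix W (Suc m))"
    unfolding Y_def matrix_scalar_ac scalar_matrix_assoc[symmetric] laplacian_mult_forest_matrix[OF nonneg] Suc ..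
  also have "\<dots> = mat 1 - norm_max_forest_matrix W"
    unfolding norm_max_forest_matrix_def Suc[symmetric] using sigma_max_pos[of W]
    by (simp add: scaleR_diff_right)
  finally have "norm_max_forest_matrix W = mat 1 - laplacian W ** Y" by simp
  moreover have "laplacian W ** Y = Y ** laplacian W"
    unfolding Y_def matrix_scalar_ac scalar_matrix_assoc[symmetric] laplacian_commute_forest_matrix[OF nonneg] ..
  ultimately show ?thesis by (rule that)
qed

lemma trace_norm_max_forest_matrix:
  fixes W :: "real^'n^'n"
  shows "trace (norm_max_forest_matrix W) = forest_dim W"
  using trace_forest_matrix_max[of W] sigma_max_pos[of W]
  by (simp add: norm_max_forest_matrix_def trace_def sum_divide_distrib[symmetric])

section \<open>Idempotents and the index of a matrix\<close>

lemma subspace_col_range: "subspace (col_range (A::real^'n^'m))"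
  unfolding col_range_def by (rule linear_subspace_image[OF matrix_vector_mul_linear subspace_UNIV])

lemma rank_eq_dim_col_range: "rank (A::real^'n^'m) = dim (col_range A)"
  unfolding col_range_def by (rule rank_dim_range)

lemma trace_idempotent_eq_rank:
  fixes J :: "real^'n^'n"
  assumes idem: "J ** J = J"
  shows "trace J = rank J"
proof -
  obtain B where B: "B \<subseteq> col_range J" "pairwise orthogonal B" "\<And>x. x \<in> B \<Longrightarrow> norm x = 1"
    "independent B" "card B = dim (col_range J)" "span B = col_range J"
    using orthonormal_basis_subspace[OF subspace_col_range] by blast
  have finB: "finite B" using B(4) finiteI_independent by blast
  (* P is the orthogonal projection onto the range of J, so J P = P and P J = J give tr J = tr P. *)
  define P :: "real^'n^'n" where "P = (\<chi> a c. \<Sum>b\<in>B. b $ a * b $ c)"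
  have Pv: "P *v x = (\<Sum>b\<in>B. (x \<bullet> b) *\<^sub>R b)" for x
    unfolding P_def vec_eq_iff matrix_vector_mult_def
    by (simp add: inner_vec_def sum_distrib_left sum_distrib_right sum.swap[of _ UNIV B] mult_ac)
  have fix_J: "J *v b = b" if "b \<in> col_range J" for b
    using that idem unfolding col_range_def by (auto simp: matrix_vector_mul_assoc)
  have "(J ** P) *v x = P *v x" for x
  proof -
    have "(J ** P) *v x = (\<Sum>b\<in>B. (x \<bullet> b) *\<^sub>R (J *v b))"
      by (simp add: matrix_vector_mul_assoc[symmetric] Pv matrix_vector_mult_scaleR
          linear_sum[OF matrix_vector_mul_linear])
    also have "\<dots> = (\<Sum>b\<in>B. (x \<bullet> b) *\<^sub>R b)" using fix_J B(1) by (intro sum.cong) auto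
    finally show ?thesis by (simp add: Pv)
  qed
  then have JP: "J ** P = P" by (rule matrix_eq[THEN iffD2, rule_format])
  have "(P ** J) *v x = J *v x" for x
  proof -
    have "J *v x \<in> span B" using B(6) unfolding col_range_def by auto
    then show ?thesis
      by (simp add: matrix_vector_mul_assoc[symmetric] Pv orthonormal_basis_expand[OF B(2,3) _ finB])
  qed
  then have PJ: "P ** J = J" by (rule matrix_eq[THEN iffD2, rule_format])
  have "trace J = trace P" by (metis JP PJ trace_mul_sym)
  also have "\<dots> = (\<Sum>b\<in>B. b \<bullet> b)"
    unfolding trace_def P_def by (simp add: inner_vec_def sum.swap[of _ UNIV B])
  also have "\<dots> = card B" using B(3) by (simp add: norm_eq_1)
  finally show ?thesis using B(5) by (simp add: rank_eq_dim_col_range)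
qed

lemma null_space_idempotent:
  assumes "J ** J = J"
  shows "null_space J = col_range (mat 1 - J)"
proof (intro set_eqI iffI)
  fix x assume "x \<in> null_space J"
  then have "x = (mat 1 - J) *v x" unfolding null_space_def by (simp add: matrix_vector_mult_diff_rdistrib)
  then show "x \<in> col_range (mat 1 - J)" unfolding col_range_def by (rule range_eqI)
next
  fix x assume "x \<in> col_range (mat 1 - J)"
  then obtain y where "x = y - J *v y" unfolding col_range_def by (auto simp: matrix_vector_mult_diff_rdistrib)
  then show "x \<in> null_space J"
    using assms unfolding null_space_def by (simp add: matrix_vector_mult_diff_distrib matrix_vector_mul_assoc)
qed

lemma rank_plus_dim_null_space_idempotent:
  fixes J :: "real^'n^'n"
  assumes idem: "J ** J = J"
  shows "rank J + dim (null_space J) = CARD('n)"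
proof -
  have "(mat 1 - J) ** (mat 1 - J) = mat 1 - J"
    using idem by (simp add: matrix_diff_ldistrib matrix_diff_rdistrib)
  then have "real (rank J) + real (rank (mat 1 - J)) = trace (mat 1 :: real^'n^'n)"
    using trace_idempotent_eq_rank[OF idem] trace_sub[of "mat 1" J] by (simp add: trace_idempotent_eq_rank)
  then show ?thesis
    by (simp add: trace_I null_space_idempotent[OF idem] flip: rank_eq_dim_col_range)
qed

lemma null_space_inter_col_range_idempotent:
  fixes J :: "real^'n^'n"
  assumes "J ** J = J"
  shows "null_space J \<inter> col_range J = {0}"
proof -
  have "x = 0" if "J *v x = 0" "x = J *v y" for x y
    using that assms by (metis matrix_vector_mul_assoc)
  moreover have "0 \<in> col_range J"
    unfolding col_range_def by (rule range_eqI[of _ _ 0]) simp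
  ultimately show ?thesis unfolding null_space_def col_range_def by auto
qed

lemma projector_onto_null_space_along_range:
  fixes L J Y :: "real^'n^'n"
  assumes LJ: "L ** J = 0" and J: "J = mat 1 - L ** Y" and comm: "L ** Y = Y ** L"
  shows "J ** J = J" and "null_space L = col_range J" and "col_range L = null_space J"
    and "col_range (L ** L) = col_range L"
proof -
  have L_eq: "L = L ** (L ** Y)"
    using LJ unfolding J by (simp add: matrix_diff_ldistrib)
  have JL: "J ** L = 0"
    unfolding J by (metis L_eq comm matrix_diff_rdistrib matrix_mul_assoc matrix_mul_lid right_minus_eq)
  show "J ** J = J"
    by (subst (2) J) (simp add: matrix_diff_ldistrib matrix_mul_assoc JL)
  have Jv: "J *v x = x - Y *v (L *v x)" for x
    unfolding J comm by (simp add: matrix_vector_mult_diff_rdistrib matrix_vector_mul_assoc)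
  have Jv': "J *v x = x - L *v (Y *v x)" for x
    unfolding J by (simp add: matrix_vector_mult_diff_rdistrib matrix_vector_mul_assoc)
  show "null_space L = col_range J"
  proof (intro set_eqI iffI)
    fix x assume "x \<in> null_space L"
    then have "x = J *v x" using Jv[of x] unfolding null_space_def by simp
    then show "x \<in> col_range J" unfolding col_range_def by (rule range_eqI)
  qed (use LJ in \<open>auto simp: col_range_def null_space_def matrix_vector_mul_assoc\<close>)
  show "col_range L = null_space J"
  proof (intro set_eqI iffI)
    fix x assume "x \<in> null_space J"
    then have "x = L *v (Y *v x)" using Jv'[of x] unfolding null_space_def by simp
    then show "x \<in> col_range L" unfolding col_range_def by (rule range_eqI)
  qed (use JL in \<open>auto simp: col_range_def null_space_def matrix_vector_mul_assoc\<close>)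
  have "L *v v = (L ** L) *v (Y *v v)" for v
    by (metis L_eq matrix_mul_assoc matrix_vector_mul_assoc)
  then show "col_range (L ** L) = col_range L"
    unfolding col_range_def by (auto simp: matrix_vector_mul_assoc[symmetric] intro: range_eqI)
qed

lemma mat_pow_1: "mat_pow A 1 = A"
  unfolding mat_pow_def by simp

lemma mat_index_eq_1:
  fixes A :: "real^'n^'n"
  assumes "col_range (A ** A) = col_range A" and "rank A \<noteq> CARD('n)"
  shows "mat_index A = 1"
  unfolding mat_index_def
proof (rule Least_equality)
  show "rank (mat_pow A (Suc 1)) = rank (mat_pow A 1)"
    using assms(1) by (simp add: mat_pow_def numeral_2_eq_2 rank_eq_dim_col_range)
  fix k assume "rank (mat_pow A (Suc k)) = rank (mat_pow A k)"
  with assms(2) show "1 \<le> k" by (cases k) (auto simp: mat_pow_def rank_I)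
qed

lemma invertible_plus_transpose:
  fixes L J :: "real^'n^'n"
  assumes "null_space L \<subseteq> col_range J" and "col_range L \<subseteq> null_space J"
  shows "invertible (L + transpose J)"
proof -
  (* J kills L x, so L x is orthogonal to transpose J *v x; if they sum to 0, both vanish, and then
     x lies in the range of J while transpose J *v x = 0 makes it orthogonal to that range. *)
  have "x = 0" if "(L + transpose J) *v x = 0" for x
  proof -
    define u where "u = L *v x"
    define v where "v = transpose J *v x"
    have uv: "u = - v" using that unfolding u_def v_def by (simp add: matrix_vector_mult_add_rdistrib eq_neg_iff_add_eq_0)
    have "J *v u = 0" using assms(2) unfolding u_def col_range_def null_space_def by auto
    then have "v \<bullet> u = 0" unfolding v_def transpose_matrix_vector dot_lmul_matrix by simp
    then have "u = 0" "v = 0" using uv by auto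
    then obtain z where "x = J *v z" using assms(1) unfolding u_def null_space_def col_range_def by auto
    then have "x \<bullet> x = v \<bullet> z" unfolding v_def by (simp add: dot_lmul_matrix)
    with \<open>v = 0\<close> show "x = 0" by simp
  qed
  then have "inj ((*v) (L + transpose J))"
    by (intro injI) (metis eq_iff_diff_eq_0 matrix_vector_mult_diff_distrib)
  then show ?thesis using matrix_left_invertible_injective invertible_left_inverse by blast
qed

theorem proposition12:
  fixes W :: "real^'n^'n"
  assumes n_gt1: "CARD('n) > 1"
    and nonneg: "\<forall>i j. W $ i $ j \<ge> 0"
    and no_loops: "\<forall>i. W $ i $ i = 0"
  defines "L \<equiv> laplacian W"
    and "d \<equiv> forest_dim W"
    and "J \<equiv> norm_max_forest_matrix W"
  shows "invertible (L + transpose J)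
    \<and> (rank L = CARD('n) - rank J \<and> CARD('n) - rank J = CARD('n) - d)
    \<and> (null_space L = col_range J \<and> col_range L = null_space J)
    \<and> col_range L \<inter> col_range J = {0}
    \<and> mat_index L = 1
    \<and> eigenprojection L J"
proof -
  obtain Y where "J = mat 1 - L ** Y" "L ** Y = Y ** L"
    using norm_max_forest_matrix_eq[OF nonneg] unfolding L_def J_def by blast
  moreover have "L ** J = 0" unfolding L_def J_def by (rule laplacian_mult_norm_max_forest_matrix[OF nonneg])
  ultimately have idem: "J ** J = J" and null_L: "null_space L = col_range J"
    and range_L: "col_range L = null_space J" and range_LL: "col_range (L ** L) = col_range L"
    using projector_onto_null_space_along_range by blast+
  have rank_J: "rank J = d"
    using trace_idempotent_eq_rank[OF idem] trace_norm_max_forest_matrix[of W] unfolding J_def d_def by simp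
  have rank_sum: "rank J + rank L = CARD('n)"
    using rank_plus_dim_null_space_idempotent[OF idem] unfolding rank_eq_dim_col_range[of L] range_L .
  have index: "mat_index L = 1"
    using rank_sum rank_J forest_dim_ge_1[of W] unfolding d_def by (intro mat_index_eq_1[OF range_LL]) linarith
  have "eigenprojection L J"
    unfolding eigenprojection_def index mat_pow_1 using idem null_L range_L by simp
  moreover have "col_range L \<inter> col_range J = {0}"
    unfolding range_L by (rule null_space_inter_col_range_idempotent[OF idem])
  moreover have "invertible (L + transpose J)"
    using null_L range_L by (intro invertible_plus_transpose) simp_all
  ultimately show ?thesis using rank_sum rank_J index null_L range_L by simp
qed

end
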